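(* Let $n\ge1$ and $1\le p\le 2n$. Then $v_p>0$.
   Context: $k$ is a field of characteristic zero, $\mathcal O_n=k[x]/(x^{n+1})$, elements of $\mathcal O_n$ identified with multiplication operators, $\operatorname{ad}_x(\delta)=x\delta-\delta x$. The order filtration is $\mathcal D^p(\mathcal O_n)=\{\delta\in\operatorname{End}_k(\mathcal O_n):[f_0,[f_1,\dots,[f_p,\delta]\dots]]=0\ \forall f_i\in\mathcal O_n\}$. For $\delta\in\mathcal D^p(\mathcal O_n)$, $\operatorname{ad}_x^p(\delta)$ is multiplication by an element of $\mathcal O_n$ and $\operatorname{ad}_x^p:\mathcal D^p(\mathcal O_n)\to\mathcal O_n$ is $\mathcal O_n$-linear, so its image is an ideal $(x^{v_p})$ of $\mathcal O_n$; $v_p\in\{0,\dots,n\}$ denotes the corresponding exponent. *)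

theory Defs
  imports "HOL-Computational_Algebra.Polynomial"
begin

text \<open>O_n = k[x]/(x^(n+1)) is modelled as the set of polynomials of degree \<le> n,
  with multiplication followed by reduction modulo x^(n+1).\<close>

definition On :: "nat \<Rightarrow> 'a::field poly set" where
  "On n = {f. degree f \<le> n}"

definition mulO :: "nat \<Rightarrow> 'a::field poly \<Rightarrow> 'a poly \<Rightarrow> 'a poly" where
  "mulO n f g = (f * g) mod monom 1 (Suc n)"

text \<open>k-linear endomorphisms of O_n (taken to be 0 outside O_n, for extensionality).\<close>
definition EndO :: "nat \<Rightarrow> ('a::field poly \<Rightarrow> 'a poly) set" where
  "EndO n = {d. (\<forall>g\<in>On n. d g \<in> On n)
              \<and> (\<forall>f\<in>On n. \<forall>g\<in>On n. d (f + g) = d f + d g)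
              \<and> (\<forall>c. \<forall>f\<in>On n. d (smult c f) = smult c (d f))
              \<and> (\<forall>g. g \<notin> On n \<longrightarrow> d g = 0)}"

definition multop :: "nat \<Rightarrow> 'a::field poly \<Rightarrow> 'a poly \<Rightarrow> 'a poly" where
  "multop n f = (\<lambda>g. if g \<in> On n then mulO n f g else 0)"

definition commO :: "nat \<Rightarrow> 'a::field poly \<Rightarrow> ('a poly \<Rightarrow> 'a poly) \<Rightarrow> ('a poly \<Rightarrow> 'a poly)" where
  "commO n f d = (\<lambda>g. if g \<in> On n then mulO n f (d g) - d (mulO n f g) else 0)"

definition Dord :: "nat \<Rightarrow> nat \<Rightarrow> ('a::field poly \<Rightarrow> 'a poly) set" where
  "Dord n p = {d \<in> EndO n. \<forall>fs. length fs = Suc p \<longrightarrow> set fs \<subseteq> On n \<longrightarrow>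
                   foldr (commO n) fs d = (\<lambda>_. 0)}"

definition adx :: "nat \<Rightarrow> ('a::field poly \<Rightarrow> 'a poly) \<Rightarrow> ('a poly \<Rightarrow> 'a poly)" where
  "adx n = commO n [:0, 1:]"

definition adx_image :: "nat \<Rightarrow> nat \<Rightarrow> 'a::field poly set" where
  "adx_image n p = {f \<in> On n. \<exists>d \<in> Dord n p. (adx n ^^ p) d = multop n f}"

definition xideal :: "nat \<Rightarrow> nat \<Rightarrow> 'a::field poly set" where
  "xideal n v = {mulO n (monom 1 v) g | g. g \<in> On n}"

definition vp :: "'a::field itself \<Rightarrow> nat \<Rightarrow> nat \<Rightarrow> nat" where
  "vp _ n p = (LEAST v. (adx_image n p :: 'a poly set) = xideal n v)"

end

theory Submission
  imports Defs
begin

text \<open>The image of ad_x^p on D^p(O_n) is stable under multiplication by O_n, because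
  precomposing \<delta> with a multiplication operator commutes with every commutator. A subset of
  O_n containing 0 and stable under multiplication is the ideal (x^v) for the least v with x^v in it, since every
  nonzero element is a unit times a power of x. Hence v_p = 0 would give 1 = ad_x(Y) for
  Y = ad_x^(p-1)(\<delta>), i.e. [x, Y] = 1. The Leibniz rule then yields [x^(k+1), Y] = (k+1) x^k,
  and k = n gives 0 = (n+1) x^n, impossible in characteristic zero.\<close>

lemma mod_monom_eq_self: "(f::'a::field poly) \<in> On n \<Longrightarrow> f mod monom 1 (Suc n) = f"
  unfolding On_def by (intro mod_poly_less) (simp add: degree_monom_eq)

lemma mod_monom_in_On: "(f::'a::field poly) mod monom 1 (Suc n) \<in> On n"
proof -
  have "f mod monom 1 (Suc n) = 0 \<or> degree (f mod monom 1 (Suc n)) < Suc n"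
    using degree_mod_less[of "monom (1::'a) (Suc n)" f] by (simp add: degree_monom_eq)
  then show ?thesis
    unfolding On_def by auto
qed

lemma zero_in_On: "0 \<in> On n"
  and one_in_On: "1 \<in> On n"
  unfolding On_def by simp_all

lemma monom_in_On: "v \<le> n \<Longrightarrow> monom (1::'a::field) v \<in> On n"
  unfolding On_def by (simp add: degree_monom_eq)

lemma add_in_On: "a \<in> On n \<Longrightarrow> b \<in> On n \<Longrightarrow> a + b \<in> On n"
  unfolding On_def using degree_add_le by auto

lemma smult_in_On: "a \<in> On n \<Longrightarrow> smult c a \<in> On n"
  unfolding On_def using degree_smult_le order_trans by blast

lemma mulO_in_On: "mulO n f g \<in> On n"
  unfolding mulO_def by (rule mod_monom_in_On)

lemma mulO_0 [simp]: "mulO n f 0 = 0" "mulO n 0 f = 0"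
  unfolding mulO_def by simp_all

lemma mulO_1: "g \<in> On n \<Longrightarrow> mulO n 1 g = g"
  unfolding mulO_def by (simp add: mod_monom_eq_self)

lemma mulO_assoc: "mulO n f (mulO n h g) = mulO n (f * h) g"
  unfolding mulO_def by (metis mod_mult_right_eq mult.assoc)

lemma mulO_mulO_left: "mulO n (mulO n f h) g = mulO n (f * h) g"
  unfolding mulO_def by (simp add: mod_mult_left_eq)

lemma mulO_commute: "mulO n f g = mulO n g f"
  unfolding mulO_def by (simp add: mult.commute)

lemma mulO_add: "mulO n f (a + b) = mulO n f a + mulO n f b"
  unfolding mulO_def by (simp add: distrib_left poly_mod_add_left)

lemma mulO_diff: "mulO n f (a - b) = mulO n f a - mulO n f b"
  unfolding mulO_def by (simp add: right_diff_distrib poly_mod_diff_left)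

lemma mulO_smult: "mulO n f (smult c a) = smult c (mulO n f a)"
  unfolding mulO_def by (simp add: mod_smult_left)

lemma x_power_eq_monom: "[:0, 1:] ^ k = monom (1::'a::comm_ring_1) k"
  by (simp add: monom_altdef)

lemma mulO_monom_Suc: "mulO n (monom 1 (Suc n)) f = 0"
  unfolding mulO_def by simp

lemma multop_in_On: "multop n f g \<in> On n"
  unfolding multop_def by (simp add: mulO_in_On zero_in_On)

lemma multop_add: "a \<in> On n \<Longrightarrow> b \<in> On n \<Longrightarrow> multop n f (a + b) = multop n f a + multop n f b"
  unfolding multop_def by (simp add: add_in_On mulO_add)

lemma multop_smult: "a \<in> On n \<Longrightarrow> multop n f (smult c a) = smult c (multop n f a)"
  unfolding multop_def by (simp add: smult_in_On mulO_smult)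

lemma multop_comp_multop: "multop n f \<circ> multop n h = multop n (mulO n h f)"
  by (auto simp: multop_def mulO_in_On zero_in_On mulO_assoc mulO_mulO_left mult.commute)

lemma commO_apply_0: "d 0 = 0 \<Longrightarrow> commO n f d 0 = 0"
  unfolding commO_def by (simp add: zero_in_On)

lemma foldr_commO_apply_0: "d 0 = 0 \<Longrightarrow> foldr (commO n) fs d 0 = 0"
  by (induction fs) (simp_all add: commO_apply_0)

lemma commO_zero: "commO n f (\<lambda>_. 0) = (\<lambda>_. 0)"
  by (rule ext) (simp add: commO_def)

lemma foldr_commO_zero: "foldr (commO n) fs (\<lambda>_. 0) = (\<lambda>_. 0)"
  by (induction fs) (simp_all add: commO_zero)

lemma commO_comp_multop:
  assumes "d 0 = 0"
  shows "commO n f (d \<circ> multop n h) = commO n f d \<circ> multop n h"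
proof
  fix g
  show "commO n f (d \<circ> multop n h) g = (commO n f d \<circ> multop n h) g"
  proof (cases "g \<in> On n")
    case True
    then show ?thesis
      by (simp add: commO_def multop_def mulO_in_On mulO_assoc mult.commute)
  next
    case False
    then show ?thesis
      using commO_apply_0[of d n f, OF assms] by (simp add: commO_def multop_def assms)
  qed
qed

lemma foldr_commO_comp_multop:
  "d 0 = 0 \<Longrightarrow> foldr (commO n) fs (d \<circ> multop n h) = foldr (commO n) fs d \<circ> multop n h"
  by (induction fs) (simp_all add: commO_comp_multop foldr_commO_apply_0)

lemma commO_mult:
  assumes "g \<in> On n"
  shows "commO n (f * h) d g = mulO n f (commO n h d g) + commO n f d (mulO n h g)"
  using assms by (simp add: commO_def mulO_in_On mulO_diff mulO_assoc)

lemma EndO_apply_0: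
  assumes "d \<in> EndO n"
  shows "d 0 = 0"
proof -
  have "d (0 + 0) = d 0 + d 0"
    using assms zero_in_On unfolding EndO_def by blast
  then have "d 0 + d 0 = d 0 + 0"
    by (metis add.right_neutral)
  then show ?thesis
    by (rule add_left_imp_eq)
qed

lemma Dord_apply_0: "d \<in> Dord n p \<Longrightarrow> d 0 = 0"
  unfolding Dord_def using EndO_apply_0 by blast

lemma EndO_comp_multop:
  assumes "d \<in> EndO n"
  shows "d \<circ> multop n h \<in> EndO n"
  unfolding EndO_def
proof (intro CollectI conjI ballI allI impI)
  fix g :: "'a poly"
  show "(d \<circ> multop n h) g \<in> On n"
    using assms multop_in_On unfolding EndO_def by auto
  assume "g \<notin> On n"
  then show "(d \<circ> multop n h) g = 0"
    using EndO_apply_0[OF assms] by (simp add: multop_def)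
next
  fix a b :: "'a poly"
  assume "a \<in> On n" "b \<in> On n"
  then show "(d \<circ> multop n h) (a + b) = (d \<circ> multop n h) a + (d \<circ> multop n h) b"
    using assms multop_in_On[of n h] unfolding EndO_def by (simp add: multop_add)
next
  fix c and a :: "'a poly"
  assume "a \<in> On n"
  then show "(d \<circ> multop n h) (smult c a) = smult c ((d \<circ> multop n h) a)"
    using assms multop_in_On[of n h] unfolding EndO_def by (simp add: multop_smult)
qed

lemma Dord_comp_multop:
  assumes "d \<in> Dord n p"
  shows "d \<circ> multop n h \<in> Dord n p"
  using assms Dord_apply_0[OF assms]
  by (auto simp: Dord_def EndO_comp_multop foldr_commO_comp_multop)

lemma zero_in_adx_image: "0 \<in> adx_image n p"
proof -
  have "(\<lambda>_. 0) \<in> Dord n p"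
    by (simp add: Dord_def EndO_def zero_in_On foldr_commO_zero)
  moreover have "(adx n ^^ p) (\<lambda>_. 0) = multop n 0"
    using foldr_commO_zero[of n "replicate p [:0, 1:]"] by (simp add: adx_def multop_def fun_eq_iff)
  ultimately show ?thesis
    unfolding adx_image_def using zero_in_On by blast
qed

lemma mulO_in_adx_image:
  assumes "f \<in> adx_image n p"
  shows "mulO n h f \<in> adx_image n p"
proof -
  obtain d where d: "d \<in> Dord n p" "(adx n ^^ p) d = multop n f"
    using assms unfolding adx_image_def by blast
  from Dord_apply_0[OF d(1)]
  have "(adx n ^^ p) (d \<circ> multop n h) = multop n f \<circ> multop n h"
    using foldr_commO_comp_multop[of d n "replicate p [:0, 1:]" h] d(2) by (simp add: adx_def)
  then show ?thesis
    using Dord_comp_multop[OF d(1)] mulO_in_On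
    unfolding adx_image_def multop_comp_multop by blast
qed

lemma commO_x_power_Suc:
  assumes x: "\<And>g. g \<in> On n \<Longrightarrow> commO n [:0, 1:] Y g = g" and g: "g \<in> On n"
  shows "commO n ([:0, 1:] ^ Suc k) Y g = smult (of_nat (Suc k)) (mulO n ([:0, 1:] ^ k) g)"
proof (induction k)
  case 0
  then show ?case
    using x g by (simp add: mulO_1)
next
  case (Suc k)
  have "commO n ([:0, 1:] ^ Suc (Suc k)) Y g
      = mulO n [:0, 1:] (commO n ([:0, 1:] ^ Suc k) Y g) + mulO n ([:0, 1:] ^ Suc k) g"
    using commO_mult[OF g, of "[:0, 1:]" "[:0, 1:] ^ Suc k" Y] x[OF mulO_in_On] by simp
  also have "\<dots> = smult (of_nat (Suc k)) (mulO n ([:0, 1:] ^ Suc k) g) + mulO n ([:0, 1:] ^ Suc k) g"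
    unfolding Suc.IH by (simp only: mulO_smult mulO_assoc power_Suc)
  also have "\<dots> = smult (of_nat (Suc (Suc k))) (mulO n ([:0, 1:] ^ Suc k) g)"
    by (simp only: of_nat_Suc[of "Suc k"] smult_add_left smult_1_left add.commute)
  finally show ?case .
qed

lemma adx_ne_multop_1:
  fixes Y :: "'a::field_char_0 poly \<Rightarrow> 'a poly"
  assumes "Y 0 = 0"
  shows "adx n Y \<noteq> multop n 1"
proof
  assume "adx n Y = multop n 1"
  then have "commO n [:0, 1:] Y g = g" if "g \<in> On n" for g
    using that fun_cong[of "adx n Y" "multop n 1" g] by (simp add: adx_def multop_def mulO_1)
  from commO_x_power_Suc[OF this one_in_On, of n]
  have "commO n ([:0, 1:] ^ Suc n) Y 1 = smult (of_nat (Suc n)) (monom 1 n)"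
    by (simp add: mulO_commute[of n _ 1] mulO_1 x_power_eq_monom monom_in_On)
  moreover have "commO n ([:0, 1:] ^ Suc n) Y 1 = 0"
    using assms unfolding x_power_eq_monom by (simp add: commO_def one_in_On mulO_monom_Suc)
  ultimately have "smult (of_nat (Suc n)) (monom 1 n) = (0::'a poly)"
    by simp
  then show False
    by (simp del: of_nat_Suc)
qed

lemma one_notin_adx_image:
  assumes "1 \<le> p"
  shows "(1::'a::field_char_0 poly) \<notin> adx_image n p"
proof
  assume "(1::'a poly) \<in> adx_image n p"
  then obtain d :: "'a poly \<Rightarrow> 'a poly" where d: "d \<in> Dord n p" "(adx n ^^ p) d = multop n 1"
    unfolding adx_image_def by blast
  obtain q where q: "p = Suc q"
    using assms by (cases p) auto
  from Dord_apply_0[OF d(1)]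
  have "(adx n ^^ q) d 0 = 0"
    using foldr_commO_apply_0[of d n "replicate q [:0, 1:]"] by (simp add: adx_def)
  moreover have "adx n ((adx n ^^ q) d) = multop n 1"
    using d(2) q by simp
  ultimately show False
    using adx_ne_multop_1 by blast
qed

lemma xideal_Suc: "xideal n (Suc n) = {0}"
  unfolding xideal_def mulO_def using zero_in_On by auto

lemma monom_dvd_imp_in_xideal:
  assumes f: "f \<in> On n" and "monom 1 v dvd f"
  shows "f \<in> xideal n v"
proof -
  obtain g where g: "f = monom 1 v * g"
    using assms(2) by (rule dvdE)
  have "g \<in> On n"
  proof (cases "g = 0")
    case False
    then have "degree f = v + degree g"
      using g by (simp add: degree_mult_eq degree_monom_eq)
    then show ?thesis
      using f unfolding On_def by simp
  qed (simp add: zero_in_On)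
  moreover have "mulO n (monom 1 v) g = f"
    using f g by (simp add: mulO_def mod_monom_eq_self)
  ultimately show ?thesis
    unfolding xideal_def by blast
qed

text \<open>The inverse of q modulo x^(n+1) is a truncated geometric series in r = 1 - q / q(0).\<close>

lemma inverse_mod_monom_exists:
  fixes q :: "'a::field poly"
  assumes "coeff q 0 \<noteq> 0"
  obtains u where "(u * q) mod monom 1 (Suc n) = 1"
proof -
  define c where "c = coeff q 0"
  define r where "r = 1 - smult (1 / c) q"
  have "poly r 0 = 0"
    using assms by (simp add: r_def c_def poly_0_coeff_0)
  then obtain s where s: "r = [:0, 1:] * s"
    using dvd_iff_poly_eq_0[of 0 r] by (auto elim: dvdE)
  have "smult (1 / c) (\<Sum>i\<le>n. r ^ i) * q = (\<Sum>i\<le>n. r ^ i) * (1 - r)"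
    by (simp add: r_def mult_smult_left mult_smult_right)
  also have "\<dots> = 1 - r ^ Suc n"
    by (simp add: sum_gp_basic mult.commute)
  also have "\<dots> = 1 - s ^ Suc n * monom 1 (Suc n)"
    by (simp only: s power_mult_distrib x_power_eq_monom mult.commute)
  finally have "(smult (1 / c) (\<Sum>i\<le>n. r ^ i) * q) mod monom 1 (Suc n) = 1"
    by (simp add: mod_diff_eq[symmetric] mod_monom_eq_self one_in_On)
  then show ?thesis
    by (rule that)
qed

lemma mulO_eq_monom_order:
  fixes f :: "'a::field poly"
  assumes f: "f \<in> On n" "f \<noteq> 0"
  obtains u where "mulO n u f = monom 1 (order 0 f)"
proof -
  let ?m = "monom 1 (Suc n) :: 'a poly"
  define k where "k = order 0 f"
  obtain q where q: "f = monom 1 k * q" "\<not> [:0, 1:] dvd q"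
    using order_decomp[OF f(2), of 0] by (auto simp: k_def x_power_eq_monom)
  have "coeff q 0 \<noteq> 0"
    using q(2) dvd_iff_poly_eq_0[of 0 q] by (simp add: poly_0_coeff_0)
  then obtain u where uq: "(u * q) mod ?m = 1"
    by (rule inverse_mod_monom_exists)
  have "k \<le> n"
    using f order_degree[of f 0] unfolding On_def k_def by simp
  have "mulO n u f = (monom 1 k * ((u * q) mod ?m)) mod ?m"
    unfolding mulO_def q(1) by (simp add: mod_mult_right_eq ac_simps)
  also have "\<dots> = monom 1 k"
    using \<open>k \<le> n\<close> by (simp add: uq mod_monom_eq_self monom_in_On)
  finally show ?thesis
    unfolding k_def by (rule that)
qed

lemma mult_closed_eq_xideal:
  fixes I :: "'a::field poly set"
  assumes sub: "I \<subseteq> On n" and zero: "0 \<in> I" and closed: "\<And>h f. f \<in> I \<Longrightarrow> mulO n h f \<in> I"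
  shows "\<exists>v. I = xideal n v"
proof (cases "I = {0}")
  case True
  then show ?thesis
    using xideal_Suc by metis
next
  case False
  have monom_order_in: "monom 1 (order 0 g) \<in> I" if "g \<in> I" "g \<noteq> 0" for g
    using that sub closed by (metis mulO_eq_monom_order subsetD)
  obtain f where "f \<in> I" "f \<noteq> 0"
    using False zero by blast
  define v where "v = (LEAST k. monom 1 k \<in> I)"
  have v: "monom 1 v \<in> I"
    unfolding v_def using monom_order_in[OF \<open>f \<in> I\<close> \<open>f \<noteq> 0\<close>] by (rule LeastI)
  have "I = xideal n v"
  proof
    show "I \<subseteq> xideal n v"
    proof
      fix g assume "g \<in> I"
      show "g \<in> xideal n v"
      proof (cases "g = 0")
        case False
        then have "v \<le> order 0 g"
          unfolding v_def using monom_order_in[OF \<open>g \<in> I\<close>] by (simp add: Least_le)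
        then show ?thesis
          using \<open>g \<in> I\<close> False sub by (auto intro: monom_dvd_imp_in_xideal simp: monom_1_dvd_iff)
      qed (simp add: monom_dvd_imp_in_xideal zero_in_On)
    qed
    show "xideal n v \<subseteq> I"
      unfolding xideal_def using closed[OF v] by (auto simp: mulO_commute)
  qed
  then show ?thesis ..
qed

theorem lemma5:
  fixes n p :: nat
  assumes "1 \<le> n" and "1 \<le> p" and "p \<le> 2 * n"
  shows "0 < vp TYPE('a::field_char_0) n p"
proof -
  let ?I = "adx_image n p :: 'a poly set"
  have "?I \<subseteq> On n"
    unfolding adx_image_def by blast
  then have "\<exists>v. ?I = xideal n v"
    using zero_in_adx_image mulO_in_adx_image by (rule mult_closed_eq_xideal)
  then have "?I = xideal n (vp TYPE('a) n p)"
    unfolding vp_def by (rule LeastI_ex)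
  moreover have "1 \<notin> ?I"
    using \<open>1 \<le> p\<close> by (rule one_notin_adx_image)
  moreover have "1 \<in> xideal n 0"
    by (rule monom_dvd_imp_in_xideal) (simp_all add: one_in_On)
  ultimately show ?thesis
    by (metis gr0I)
qed

end
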